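(* Let $\{(a_i,b_i,m_i,n_i):i\in\mathbb{Z}\}$ be a positive ABMN solution and $\phi_i=\frac{n_{i-1}-n_i}{m_i-m_{i-1}}$. Then for every $i\in\mathbb{Z}$: $\frac{m_i-m_{i-1}}{m_{i+1}-m_{i-1}}=\frac{1}{c(\phi_i)}$, $\quad\frac{n_{i-1}-n_i}{n_{i-1}-n_{i+1}}=\frac{1}{d(\phi_i)}$, $\quad s(\phi_i)=\phi_{i+1}$.
   Context: ABMN system on $\mathbb{Z}$: real variables $a_i,b_i\ge0$, $m_i,n_i$ with, for all $i$, $(a_i+b_i)(m_i+a_i)=a_im_{i+1}+b_im_{i-1}$, $(a_i+b_i)(n_i+b_i)=a_in_{i+1}+b_in_{i-1}$, $(a_i+b_i)^2=b_i(m_{i+1}-m_{i-1})$, $(a_i+b_i)^2=a_i(n_{i-1}-n_{i+1})$; positive if all $a_i,b_i>0$ (then $m$ is strictly increasing and $n$ strictly decreasing). For $x>0$ let $\omega=\sqrt{8x+1}$, $c(x)=\frac{(\omega+3)^2}{16}$, $d(x)=\frac{(\omega+3)^2}{8(\omega+1)}$, $s(x)=\frac{(\omega-1)^2}{4(\omega+7)}$. *)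

theory Defs
  imports Complex_Main
begin

definition ABMN_solution :: "(int \<Rightarrow> real) \<Rightarrow> (int \<Rightarrow> real) \<Rightarrow> (int \<Rightarrow> real) \<Rightarrow> (int \<Rightarrow> real) \<Rightarrow> bool" where
  "ABMN_solution a b m n \<longleftrightarrow>
     (\<forall>i. a i \<ge> 0 \<and> b i \<ge> 0 \<and>
       (a i + b i) * (m i + a i) = a i * m (i + 1) + b i * m (i - 1) \<and>
       (a i + b i) * (n i + b i) = a i * n (i + 1) + b i * n (i - 1) \<and>
       (a i + b i)^2 = b i * (m (i + 1) - m (i - 1)) \<and>
       (a i + b i)^2 = a i * (n (i - 1) - n (i + 1)))"

definition positive_ABMN_solution :: "(int \<Rightarrow> real) \<Rightarrow> (int \<Rightarrow> real) \<Rightarrow> (int \<Rightarrow> real) \<Rightarrow> (int \<Rightarrow> real) \<Rightarrow> bool" where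
  "positive_ABMN_solution a b m n \<longleftrightarrow> ABMN_solution a b m n \<and> (\<forall>i. a i > 0 \<and> b i > 0)"

definition omega_fn :: "real \<Rightarrow> real" where
  "omega_fn x = sqrt (8 * x + 1)"

definition c_fn :: "real \<Rightarrow> real" where
  "c_fn x = (omega_fn x + 3)^2 / 16"

definition d_fn :: "real \<Rightarrow> real" where
  "d_fn x = (omega_fn x + 3)^2 / (8 * (omega_fn x + 1))"

definition s_fn :: "real \<Rightarrow> real" where
  "s_fn x = (omega_fn x - 1)^2 / (4 * (omega_fn x + 7))"

end

theory Submission
  imports Defs
begin

text \<open>
  At each site the four ABMN equations determine all neighbouring differences of m and n in
  terms of a i and b i alone. Consequently \<phi> i = t (1 + 2 t) with t = b i / a i, so that
  \<omega>(\<phi> i) = 4 t + 1 is rational in t, and each claimed identity collapses to a rational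
  identity in t.
\<close>

lemma three_point_differences:
  fixes p q x0 x1 x2 :: real
  assumes p: "p > 0" and q: "q > 0"
    and mean: "(p + q) * (x1 + p) = p * x2 + q * x0"
    and spread: "(p + q)^2 = q * (x2 - x0)"
  shows "x1 - x0 = p^2 / q" and "x2 - x1 = q + 2 * p"
proof -
  have x2: "x2 = x0 + (p + q)^2 / q" using spread q by (simp add: field_simps)
  have "(p + q) * (x1 - x0) = (p + q) * (p^2 / q)"
    using mean q unfolding x2 by (simp add: field_simps power2_eq_square)
  moreover have "p + q \<noteq> 0" using p q by simp
  ultimately show lower: "x1 - x0 = p^2 / q" by (metis mult_left_cancel)
  show "x2 - x1 = q + 2 * p" using lower q unfolding x2 by (simp add: field_simps power2_eq_square)
qed

lemma omega_fn_param:
  fixes t :: real assumes "t \<ge> 0"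
  shows "omega_fn (t * (1 + 2 * t)) = 4 * t + 1"
proof -
  have "8 * (t * (1 + 2 * t)) + 1 = (4 * t + 1)^2" by (simp add: algebra_simps power2_eq_square)
  with assms show ?thesis unfolding omega_fn_def by simp
qed

lemma c_fn_param:
  fixes t :: real assumes "t \<ge> 0"
  shows "c_fn (t * (1 + 2 * t)) = (1 + t)^2"
  using assms unfolding c_fn_def omega_fn_param[OF assms] by (simp add: power2_eq_square algebra_simps)

lemma d_fn_param:
  fixes t :: real assumes "t \<ge> 0"
  shows "d_fn (t * (1 + 2 * t)) = (1 + t)^2 / (1 + 2 * t)"
  using assms unfolding d_fn_def omega_fn_param[OF assms] by (simp add: power2_eq_square field_simps)

lemma s_fn_param:
  fixes t :: real assumes "t \<ge> 0"
  shows "s_fn (t * (1 + 2 * t)) = t^2 / (t + 2)"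
  using assms unfolding s_fn_def omega_fn_param[OF assms] by (simp add: power2_eq_square field_simps)

lemma positive_ABMN_differences:
  assumes "positive_ABMN_solution a b m n"
  shows "m i - m (i - 1) = a i^2 / b i" and "m (i + 1) - m i = b i + 2 * a i"
    and "n (i - 1) - n i = a i + 2 * b i" and "n i - n (i + 1) = b i^2 / a i"
proof -
  have pos: "a i > 0" "b i > 0"
    and m_mean: "(a i + b i) * (m i + a i) = a i * m (i + 1) + b i * m (i - 1)"
    and n_mean: "(b i + a i) * (n i + b i) = b i * n (i - 1) + a i * n (i + 1)"
    and m_spread: "(a i + b i)^2 = b i * (m (i + 1) - m (i - 1))"
    and n_spread: "(b i + a i)^2 = a i * (n (i - 1) - n (i + 1))"
    using assms unfolding positive_ABMN_solution_def ABMN_solution_def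
    by (auto simp: algebra_simps)
  show "m i - m (i - 1) = a i^2 / b i" and "m (i + 1) - m i = b i + 2 * a i"
    using three_point_differences[OF pos m_mean m_spread] by simp_all
  \<comment> \<open>The n-equations are the m-equations with a, b swapped and the index reversed.\<close>
  show "n (i - 1) - n i = a i + 2 * b i" and "n i - n (i + 1) = b i^2 / a i"
    using three_point_differences[OF pos(2,1) n_mean n_spread] by simp_all
qed

lemma positive_ABMN_ratios:
  assumes sol: "positive_ABMN_solution a b m n" and t_def: "t = b i / a i"
  shows "(m i - m (i - 1)) / (m (i + 1) - m (i - 1)) = 1 / (1 + t)^2"
    and "(n (i - 1) - n i) / (n (i - 1) - n (i + 1)) = (1 + 2 * t) / (1 + t)^2"
    and "(n (i - 1) - n i) / (m i - m (i - 1)) = t * (1 + 2 * t)"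
    and "(n i - n (i + 1)) / (m (i + 1) - m i) = t^2 / (t + 2)"
proof -
  have pos: "a i > 0" "b i > 0" using sol by (simp_all add: positive_ABMN_solution_def)
  then have t_pos: "t > 0" by (simp add: t_def)
  note diffs = positive_ABMN_differences[OF sol, of i]
  have b: "b i = t * a i" using pos by (simp add: t_def)
  have ab: "a i + b i = a i * (1 + t)" and a2b: "a i + 2 * b i = a i * (1 + 2 * t)"
    and b2a: "b i + 2 * a i = a i * (t + 2)"
    unfolding b by algebra+
  have m_spread: "m (i + 1) - m (i - 1) = (a i * (1 + t))^2 / b i"
    using diffs(1,2) pos unfolding ab[symmetric] by (simp add: field_simps power2_eq_square)
  have n_spread: "n (i - 1) - n (i + 1) = (a i * (1 + t))^2 / a i"
    using diffs(3,4) pos unfolding ab[symmetric] by (simp add: field_simps power2_eq_square)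
  show "(m i - m (i - 1)) / (m (i + 1) - m (i - 1)) = 1 / (1 + t)^2"
    unfolding diffs(1) m_spread using pos t_pos by (simp add: power_mult_distrib)
  show "(n (i - 1) - n i) / (n (i - 1) - n (i + 1)) = (1 + 2 * t) / (1 + t)^2"
    unfolding diffs(3) n_spread a2b using pos t_pos by (simp add: power2_eq_square)
  show "(n (i - 1) - n i) / (m i - m (i - 1)) = t * (1 + 2 * t)"
    unfolding diffs(1,3) b using pos t_pos by (simp add: field_simps power2_eq_square)
  show "(n i - n (i + 1)) / (m (i + 1) - m i) = t^2 / (t + 2)"
    unfolding diffs(2,4) b2a unfolding b using pos t_pos by (simp add: power2_eq_square)
qed

theorem mainTheorem11:
  fixes a b m n :: "int \<Rightarrow> real" and \<phi> :: "int \<Rightarrow> real"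
  assumes "positive_ABMN_solution a b m n"
    and "\<And>i. \<phi> i = (n (i - 1) - n i) / (m i - m (i - 1))"
  shows "\<forall>i. (m i - m (i - 1)) / (m (i + 1) - m (i - 1)) = 1 / c_fn (\<phi> i)
            \<and> (n (i - 1) - n i) / (n (i - 1) - n (i + 1)) = 1 / d_fn (\<phi> i)
            \<and> s_fn (\<phi> i) = \<phi> (i + 1)"
proof
  fix i
  define t where "t = b i / a i"
  have t: "t \<ge> 0" using assms(1) by (simp add: t_def positive_ABMN_solution_def ABMN_solution_def)
  note ratios = positive_ABMN_ratios[OF assms(1) t_def]
  have phi: "\<phi> i = t * (1 + 2 * t)" using assms(2)[of i] ratios(3) by simp
  have phi_next: "\<phi> (i + 1) = t^2 / (t + 2)" using assms(2)[of "i + 1"] ratios(4) by simp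
  show "(m i - m (i - 1)) / (m (i + 1) - m (i - 1)) = 1 / c_fn (\<phi> i)
            \<and> (n (i - 1) - n i) / (n (i - 1) - n (i + 1)) = 1 / d_fn (\<phi> i)
            \<and> s_fn (\<phi> i) = \<phi> (i + 1)"
    unfolding ratios(1,2) phi phi_next c_fn_param[OF t] d_fn_param[OF t] s_fn_param[OF t]
    by simp
qed

end
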